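(* Let $r\ge1$ and let $f:\mathbb{D}^r\times\mathbb{P}^1\to\mathbb{D}^r\times\mathbb{P}^1$, $(x,z)\mapsto(x,f_x(z))$, be a holomorphic family of maps of degree $d\geq2$ parametrized by the polydisk $\mathbb{D}^r\subset\mathbb{C}^r$, with a marked critical point $c:\mathbb{D}^r\to\mathbb{P}^1$. Assume that $c(0)$ is attracted to a parabolic fixed point at $z=0$ of $f_0$ (i.e. $f_0(0)=0$, $f_0'(0)$ is a root of unity, and $f_0^n(c(0))\to0$). Then for every constant $\rho>1$ there exists $\delta>0$ such that the functions $\alpha_n(x):=f^n_{x/\rho^n}(c(x/\rho^n))$ converge uniformly to $0$ on the polydisk $(\mathbb{D}_\delta)^r$ as $n\to\infty$.
   Context: $\mathbb{D}$ is the unit disk, $\mathbb{D}_\delta$ the disk of radius $\delta$ centered at $0$; $f^n_y$ denotes the $n$-th iterate of $f_y$. *)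

theory Defs
  imports "HOL-Analysis.Analysis"
begin

text \<open>The Riemann sphere P^1 is modelled as complex option: Some z is the finite point z,
  None is the point at infinity.\<close>

type_synonym sphere = "complex option"

definition inv_pt :: "sphere \<Rightarrow> sphere" where
  "inv_pt q = (case q of None \<Rightarrow> Some 0
                | Some z \<Rightarrow> (if z = 0 then None else Some (1 / z)))"

text \<open>Standard chart of P^1 adapted to the point p (identity if p is finite,
  w = 1/z if p = \<infinity>), and its inverse.\<close>
definition coord :: "sphere \<Rightarrow> sphere \<Rightarrow> complex" where
  "coord p q = (case (if p = None then inv_pt q else q) of None \<Rightarrow> 0 | Some w \<Rightarrow> w)"

definition uncoord :: "sphere \<Rightarrow> complex \<Rightarrow> sphere" where
  "uncoord p w = (if p = None then inv_pt (Some w) else Some w)"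

definition holo_on :: "(complex ^ 'r \<Rightarrow> complex) \<Rightarrow> (complex ^ 'r) set \<Rightarrow> bool" where
  "holo_on h S \<longleftrightarrow> (\<forall>x\<in>S. \<exists>D. (h has_derivative D) (at x) \<and> (\<forall>c v. D (c *s v) = c * D v))"

definition holo_sphere :: "(complex ^ 'r \<Rightarrow> sphere) \<Rightarrow> (complex ^ 'r) set \<Rightarrow> bool" where
  "holo_sphere g S \<longleftrightarrow>
     (\<forall>x\<in>S. \<exists>e>0. \<exists>h. holo_on h (ball x e) \<and>
        ((\<forall>y\<in>ball x e. g y = Some (h y)) \<or> (\<forall>y\<in>ball x e. g y = inv_pt (Some (h y)))))"

definition polydisk :: "real \<Rightarrow> (complex ^ 'r) set" where
  "polydisk \<delta> = {x. \<forall>i. norm (x $ i) < \<delta>}"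

definition hom :: "(nat \<Rightarrow> complex) \<Rightarrow> nat \<Rightarrow> complex \<Rightarrow> complex \<Rightarrow> complex" where
  "hom a d z w = (\<Sum>j\<le>d. a j * z ^ j * w ^ (d - j))"

definition proj_pt :: "complex \<Rightarrow> complex \<Rightarrow> sphere" where
  "proj_pt u v = (if v = 0 then None else Some (u / v))"

text \<open>The rational map [z:w] \<mapsto> [P(z,w) : Q(z,w)] on P^1.\<close>
definition rat_map :: "(nat \<Rightarrow> complex) \<Rightarrow> (nat \<Rightarrow> complex) \<Rightarrow> nat \<Rightarrow> sphere \<Rightarrow> sphere" where
  "rat_map a b d p = (case p of
       None \<Rightarrow> proj_pt (a d) (b d)
     | Some z \<Rightarrow> proj_pt (hom a d z 1) (hom b d z 1))"

text \<open>P, Q have no common zero in C^2 - {0}, i.e. [P:Q] is a rational map of degree exactly d.\<close>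
definition no_common_zero :: "(nat \<Rightarrow> complex) \<Rightarrow> (nat \<Rightarrow> complex) \<Rightarrow> nat \<Rightarrow> bool" where
  "no_common_zero a b d \<longleftrightarrow> (\<forall>z w. (z, w) \<noteq> (0, 0) \<longrightarrow> hom a d z w \<noteq> 0 \<or> hom b d z w \<noteq> 0)"

definition is_crit :: "(sphere \<Rightarrow> sphere) \<Rightarrow> sphere \<Rightarrow> bool" where
  "is_crit g p \<longleftrightarrow> deriv (\<lambda>w. coord (g p) (g (uncoord p w))) (coord p p) = 0"

end

theory Submission
  imports Defs "HOL-Complex_Analysis.Complex_Analysis"
begin

(* Since f_0'(0) is a root of unity, the chart expression F of f_0 is L-Lipschitz near 0 for
   any L with 1 < L < rho, and f_y differs from F by O(|y|) there.  After k steps the orbit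
   of c(0) has entered this chart, and f_y^k(c(y)) is O(|y|)-close to f_0^k(c(0)).  Comparing
   the two orbits step by step, their distance after t more steps is at most (C + K t) L^t |y|;
   for y = x / rho^n this is at most (C + K n) (L / rho)^n |x|, which tends to 0 uniformly,
   while the orbit of c(0) itself tends to 0. *)

lemma proj_pt_mult: "(k::complex) \<noteq> 0 \<Longrightarrow> proj_pt (k * u) (k * v) = proj_pt u v"
  by (simp add: proj_pt_def)

lemma hom_mult: "hom a d (k * z) (k * w) = k ^ d * hom a d z w"
  unfolding hom_def sum_distrib_left
proof (rule sum.cong[OF refl])
  fix j assume "j \<in> {..d}"
  then have "k ^ d = k ^ j * k ^ (d - j)" by (simp flip: power_add)
  then show "a j * (k * z) ^ j * (k * w) ^ (d - j) = k ^ d * (a j * z ^ j * w ^ (d - j))"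
    by (simp add: power_mult_distrib algebra_simps)
qed

lemma hom_right_0: "hom a d z 0 = a d * z ^ d"
proof -
  have "hom a d z 0 = (\<Sum>j\<in>{d}. a j * z ^ j * 0 ^ (d - j))"
    unfolding hom_def by (rule sum.mono_neutral_right) auto
  then show ?thesis by simp
qed

lemma rat_map_proj_pt:
  assumes "(z, w) \<noteq> (0, 0)"
  shows "rat_map a b d (proj_pt z w) = proj_pt (hom a d z w) (hom b d z w)"
proof (cases "w = 0")
  case True
  then have "z \<noteq> 0" using assms by auto
  then have "proj_pt (hom a d z w) (hom b d z w) = proj_pt (a d) (b d)"
    using True proj_pt_mult[of "z ^ d" "a d" "b d"] by (simp add: hom_right_0 mult.commute)
  then show ?thesis using True by (simp add: rat_map_def proj_pt_def)
next
  case False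
  then have "proj_pt (hom a d z w) (hom b d z w) = proj_pt (hom a d (z / w) 1) (hom b d (z / w) 1)"
    using hom_mult[of _ d w "z / w" 1] proj_pt_mult[of "w ^ d"] by simp
  then show ?thesis using False by (simp add: rat_map_def proj_pt_def)
qed

(* The chart expression of rat_map a b d at finite points; meaningless (division by zero)
   where hom b d w 1 = 0. *)
definition rat_fun :: "(nat \<Rightarrow> complex) \<Rightarrow> (nat \<Rightarrow> complex) \<Rightarrow> nat \<Rightarrow> complex \<Rightarrow> complex" where
  "rat_fun a b d w = hom a d w 1 / hom b d w 1"

lemma rat_map_Some: "hom b d w 1 \<noteq> 0 \<Longrightarrow> rat_map a b d (Some w) = Some (rat_fun a b d w)"
  by (simp add: rat_map_def rat_fun_def proj_pt_def)

lemma holomorphic_on_rat_fun: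
  "(\<And>w. w \<in> S \<Longrightarrow> hom b d w 1 \<noteq> 0) \<Longrightarrow> rat_fun a b d holomorphic_on S"
  unfolding rat_fun_def hom_def by (intro holomorphic_intros) auto

lemma deriv_coord_rat_map:
  assumes "r > 0" "\<And>w. norm w < r \<Longrightarrow> hom b d w 1 \<noteq> 0"
  shows "deriv (\<lambda>w. coord (Some 0) (rat_map a b d (Some w))) 0 = deriv (rat_fun a b d) 0"
proof (rule deriv_cong_ev)
  have "\<forall>\<^sub>F w in nhds 0. w \<in> ball 0 r" using assms(1) by (intro eventually_nhds_in_open) auto
  then show "\<forall>\<^sub>F w in nhds 0. coord (Some 0) (rat_map a b d (Some w)) = rat_fun a b d w"
    by eventually_elim (simp add: assms(2) rat_map_Some coord_def)
qed simp

lemma norm_hom_diff_le: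
  assumes "norm w \<le> 1"
  shows "norm (hom a d w 1 - hom b d w 1) \<le> (\<Sum>j\<le>d. norm (a j - b j))"
proof -
  have "hom a d w 1 - hom b d w 1 = (\<Sum>j\<le>d. (a j - b j) * w ^ j)"
    unfolding hom_def by (simp add: sum_subtractf algebra_simps)
  also have "norm \<dots> \<le> (\<Sum>j\<le>d. norm ((a j - b j) * w ^ j))" by (rule norm_sum)
  also have "\<dots> \<le> (\<Sum>j\<le>d. norm (a j - b j))"
    using assms by (intro sum_mono) (simp add: norm_mult norm_power mult_left_le power_le_one)
  finally show ?thesis .
qed

lemma differentiable_imp_bounded_increment:
  assumes "f differentiable (at x)"
  obtains C where "C \<ge> 0" "\<forall>\<^sub>F y in nhds x. norm (f y - f x) \<le> C * norm (y - x)"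
proof -
  obtain D where D: "(f has_derivative D) (at x)"
    using assms unfolding differentiable_def by blast
  then obtain K where K: "K > 0" "\<And>v. norm (D v) \<le> norm v * K"
    using bounded_linear.pos_bounded[OF has_derivative_bounded_linear] by blast
  obtain e where e: "e > 0" "\<And>y. norm (y - x) < e \<Longrightarrow> norm (f y - f x - D (y - x)) \<le> 1 * norm (y - x)"
    using D unfolding has_derivative_at_alt by (meson zero_less_one)
  have "\<forall>\<^sub>F y in nhds x. norm (f y - f x) \<le> (1 + K) * norm (y - x)"
    unfolding eventually_nhds_metric
  proof (intro exI conjI allI impI)
    fix y assume "dist y x < e"
    then have "norm (f y - f x - D (y - x)) \<le> norm (y - x)" using e(2) by (simp add: dist_norm)
    moreover have "norm (f y - f x) \<le> norm (f y - f x - D (y - x)) + norm (D (y - x))"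
      by (metis norm_triangle_sub add.commute)
    ultimately show "norm (f y - f x) \<le> (1 + K) * norm (y - x)"
      using K(2)[of "y - x"] by (simp add: algebra_simps)
  qed (use e in simp)
  then show ?thesis using K that[of "1 + K"] by simp
qed

lemma holo_on_imp_differentiable: "holo_on h S \<Longrightarrow> x \<in> S \<Longrightarrow> h differentiable (at x)"
  unfolding holo_on_def differentiable_def by blast

(* Lifts to C^2 - {0} avoid the change of chart at infinity: rat_map acts on them by the
   polynomial map (z, w) |-> (hom a d z w, hom b d z w), see rat_map_proj_pt. *)
definition has_differentiable_lift :: "('a::real_normed_vector \<Rightarrow> sphere) \<Rightarrow> 'a \<Rightarrow> bool" where
  "has_differentiable_lift G x \<longleftrightarrow>
     (\<exists>Z W. (Z x, W x) \<noteq> (0, 0) \<and> Z differentiable (at x) \<and> W differentiable (at x) \<and>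
       (\<forall>\<^sub>F y in nhds x. G y = proj_pt (Z y) (W y)))"

lemma holo_sphere_has_differentiable_lift:
  assumes "holo_sphere c S" "x0 \<in> S"
  shows "has_differentiable_lift c x0"
proof -
  obtain e h where "e > 0" and h: "h differentiable (at x0)"
    and cases: "(\<forall>y\<in>ball x0 e. c y = Some (h y)) \<or> (\<forall>y\<in>ball x0 e. c y = inv_pt (Some (h y)))"
    using assms unfolding holo_sphere_def by (metis centre_in_ball holo_on_imp_differentiable)
  then have near: "\<forall>\<^sub>F y in nhds x0. y \<in> ball x0 e" by (intro eventually_nhds_in_open) auto
  from cases show ?thesis
  proof
    assume c_eq: "\<forall>y\<in>ball x0 e. c y = Some (h y)"
    have "\<forall>\<^sub>F y in nhds x0. c y = proj_pt (h y) 1"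
      using near by eventually_elim (simp add: c_eq proj_pt_def)
    then show ?thesis
      unfolding has_differentiable_lift_def using h by (intro exI[of _ h] exI[of _ "\<lambda>_. 1"]) auto
  next
    assume c_eq: "\<forall>y\<in>ball x0 e. c y = inv_pt (Some (h y))"
    have "\<forall>\<^sub>F y in nhds x0. c y = proj_pt 1 (h y)"
      using near by eventually_elim (simp add: c_eq inv_pt_def proj_pt_def)
    then show ?thesis
      unfolding has_differentiable_lift_def using h by (intro exI[of _ "\<lambda>_. 1"] exI[of _ h]) auto
  qed
qed

lemma has_differentiable_lift_rat_map:
  assumes G: "has_differentiable_lift G x0"
    and a: "\<forall>j\<le>d. (\<lambda>y. a y j) differentiable (at x0)" and b: "\<forall>j\<le>d. (\<lambda>y. b y j) differentiable (at x0)"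
    and nz: "no_common_zero (a x0) (b x0) d"
  shows "has_differentiable_lift (\<lambda>y. rat_map (a y) (b y) d (G y)) x0"
proof -
  obtain Z W where ZW: "(Z x0, W x0) \<noteq> (0, 0)" "Z differentiable (at x0)" "W differentiable (at x0)"
    and G_eq: "\<forall>\<^sub>F y in nhds x0. G y = proj_pt (Z y) (W y)"
    using G unfolding has_differentiable_lift_def by blast
  have "isCont (\<lambda>y. (Z y, W y)) x0"
    using ZW by (intro continuous_Pair differentiable_imp_continuous_within)
  then have "((\<lambda>y. (Z y, W y)) \<longlongrightarrow> (Z x0, W x0)) (nhds x0)"
    using tendsto_at_iff_tendsto_nhds[of "\<lambda>y. (Z y, W y)" x0] by (simp only: isCont_def)
  then have "\<forall>\<^sub>F y in nhds x0. (Z y, W y) \<noteq> (0, 0)"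
    using ZW(1) by (rule tendsto_imp_eventually_ne)
  with G_eq have "\<forall>\<^sub>F y in nhds x0.
      rat_map (a y) (b y) d (G y) = proj_pt (hom (a y) d (Z y) (W y)) (hom (b y) d (Z y) (W y))"
    by eventually_elim (simp add: rat_map_proj_pt)
  moreover have "(hom (a x0) d (Z x0) (W x0), hom (b x0) d (Z x0) (W x0)) \<noteq> (0, 0)"
    using nz ZW(1) unfolding no_common_zero_def by auto
  moreover have "(\<lambda>y. hom (a y) d (Z y) (W y)) differentiable (at x0)"
    "(\<lambda>y. hom (b y) d (Z y) (W y)) differentiable (at x0)"
    using a b ZW unfolding hom_def by (auto intro!: derivative_intros)
  ultimately show ?thesis unfolding has_differentiable_lift_def
    by (intro exI[of _ "\<lambda>y. hom (a y) d (Z y) (W y)"] exI[of _ "\<lambda>y. hom (b y) d (Z y) (W y)"]) simp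
qed

lemma has_differentiable_lift_funpow:
  assumes "has_differentiable_lift G x0"
    and "\<forall>j\<le>d. (\<lambda>y. a y j) differentiable (at x0)" "\<forall>j\<le>d. (\<lambda>y. b y j) differentiable (at x0)"
    and "no_common_zero (a x0) (b x0) d"
  shows "has_differentiable_lift (\<lambda>y. (rat_map (a y) (b y) d ^^ k) (G y)) x0"
proof (induction k)
  case (Suc k)
  then show ?case using has_differentiable_lift_rat_map[OF Suc assms(2-4)] by simp
qed (use assms in simp)

lemma has_differentiable_lift_imp_bounded_increment:
  assumes G: "has_differentiable_lift G x0" and Gx: "G x0 = Some a"
  obtains C s where "C \<ge> 0" "s > 0"
    "\<And>y. norm (y - x0) < s \<Longrightarrow> \<exists>b. G y = Some b \<and> norm (b - a) \<le> C * norm (y - x0)"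
proof -
  obtain Z W where ZW: "Z differentiable (at x0)" "W differentiable (at x0)"
    and G_eq: "\<forall>\<^sub>F y in nhds x0. G y = proj_pt (Z y) (W y)"
    using G unfolding has_differentiable_lift_def by blast
  have "G x0 = proj_pt (Z x0) (W x0)" using eventually_nhds_x_imp_x[OF G_eq] .
  then have Wx: "W x0 \<noteq> 0" and a: "a = Z x0 / W x0" using Gx by (auto simp: proj_pt_def split: if_splits)
  have W_nz: "\<forall>\<^sub>F y in nhds x0. W y \<noteq> 0"
    using Wx differentiable_imp_continuous_within[OF ZW(2)]
    by (simp add: isCont_def tendsto_at_iff_tendsto_nhds tendsto_imp_eventually_ne)
  obtain C where "C \<ge> 0" and incr: "\<forall>\<^sub>F y in nhds x0. norm (Z y / W y - Z x0 / W x0) \<le> C * norm (y - x0)"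
    using ZW Wx by (metis (no_types) differentiable_divide differentiable_imp_bounded_increment)
  have "\<forall>\<^sub>F y in nhds x0. \<exists>b. G y = Some b \<and> norm (b - a) \<le> C * norm (y - x0)"
    using W_nz incr G_eq by eventually_elim (auto simp: proj_pt_def a)
  then obtain s where "s > 0" "\<And>y. dist y x0 < s \<Longrightarrow> \<exists>b. G y = Some b \<and> norm (b - a) \<le> C * norm (y - x0)"
    unfolding eventually_nhds_metric by blast
  then show ?thesis using that \<open>C \<ge> 0\<close> by (simp add: dist_norm)
qed

lemma hom_family_bounded_increment:
  fixes a :: "'a::real_normed_vector \<Rightarrow> nat \<Rightarrow> complex"
  assumes "\<forall>j\<le>d. (\<lambda>y. a y j) differentiable (at x0)"
  obtains C where "C \<ge> 0"
    "\<forall>\<^sub>F y in nhds x0. \<forall>w. norm w \<le> 1 \<longrightarrow>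
       norm (hom (a y) d w 1 - hom (a x0) d w 1) \<le> C * norm (y - x0)"
proof -
  have "\<forall>j\<in>{..d}. \<exists>C. C \<ge> 0 \<and> (\<forall>\<^sub>F y in nhds x0. norm (a y j - a x0 j) \<le> C * norm (y - x0))"
  proof
    fix j assume "j \<in> {..d}"
    then have "(\<lambda>y. a y j) differentiable (at x0)" using assms by simp
    then obtain C where "C \<ge> 0" "\<forall>\<^sub>F y in nhds x0. norm (a y j - a x0 j) \<le> C * norm (y - x0)"
      by (rule differentiable_imp_bounded_increment)
    then show "\<exists>C. C \<ge> 0 \<and> (\<forall>\<^sub>F y in nhds x0. norm (a y j - a x0 j) \<le> C * norm (y - x0))" by blast
  qed
  then obtain C where C: "\<forall>j\<in>{..d}. C j \<ge> 0 \<and>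
      (\<forall>\<^sub>F y in nhds x0. norm (a y j - a x0 j) \<le> C j * norm (y - x0))"
    by (rule bchoice_iff[THEN iffD1, THEN exE])
  then have ev: "\<forall>j\<in>{..d}. \<forall>\<^sub>F y in nhds x0. norm (a y j - a x0 j) \<le> C j * norm (y - x0)"
    by blast
  have "\<forall>\<^sub>F y in nhds x0. \<forall>w. norm w \<le> 1 \<longrightarrow>
          norm (hom (a y) d w 1 - hom (a x0) d w 1) \<le> (\<Sum>j\<le>d. C j) * norm (y - x0)"
    using eventually_ball_finite[OF finite_atMost ev]
  proof eventually_elim
    case (elim y)
    show ?case
    proof (intro allI impI)
      fix w :: complex assume "norm w \<le> 1"
      then have "norm (hom (a y) d w 1 - hom (a x0) d w 1) \<le> (\<Sum>j\<le>d. norm (a y j - a x0 j))"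
        by (rule norm_hom_diff_le)
      also have "\<dots> \<le> (\<Sum>j\<le>d. C j * norm (y - x0))" using elim by (intro sum_mono) auto
      finally show "norm (hom (a y) d w 1 - hom (a x0) d w 1) \<le> (\<Sum>j\<le>d. C j) * norm (y - x0)"
        by (simp add: sum_distrib_right)
    qed
  qed
  moreover have "(\<Sum>j\<le>d. C j) \<ge> 0" using C by (intro sum_nonneg) blast
  ultimately show ?thesis using that by blast
qed

lemma norm_divide_diff_le:
  fixes p q p' q' :: "'a::real_normed_field"
  assumes "norm (p' - p) \<le> e1" "norm (q' - q) \<le> e2" "m > 0" "norm q' \<ge> m" "norm q \<ge> m" "norm p \<le> M"
  shows "norm (p' / q' - p / q) \<le> e1 / m + M * e2 / m\<^sup>2"
proof -
  have "e1 \<ge> 0" "e2 \<ge> 0" "M \<ge> 0" using assms(1,2,6) norm_ge_zero order_trans by blast+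
  have "q' \<noteq> 0" "q \<noteq> 0" using assms(3-5) by auto
  then have "p' / q' - p / q = (p' - p) / q' + p * (q - q') / (q' * q)"
    by (simp add: field_simps)
  then have "norm (p' / q' - p / q) \<le> norm (p' - p) / norm q' + norm p * norm (q - q') / (norm q' * norm q)"
    by (metis norm_triangle_ineq norm_divide norm_mult)
  also have "norm (p' - p) / norm q' \<le> e1 / m"
    using assms \<open>e1 \<ge> 0\<close> by (intro frac_le) auto
  also have "norm p * norm (q - q') / (norm q' * norm q) \<le> M * e2 / (m * m)"
    using assms \<open>e2 \<ge> 0\<close> \<open>M \<ge> 0\<close> by (intro frac_le mult_mono) (auto simp: norm_minus_commute)
  finally show ?thesis by (simp add: power2_eq_square)
qed

lemma eventually_hom_near_0: "e > 0 \<Longrightarrow> \<forall>\<^sub>F w in nhds 0. dist (hom p d w 1) (hom p d 0 1) < e"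
proof -
  have "isCont (\<lambda>w. hom p d w 1) 0" unfolding hom_def by (intro continuous_intros)
  then have "((\<lambda>w. hom p d w 1) \<longlongrightarrow> hom p d 0 1) (nhds 0)"
    using tendsto_at_iff_tendsto_nhds[of "\<lambda>w. hom p d w 1" 0] by (simp only: isCont_def)
  then show "e > 0 \<Longrightarrow> ?thesis" by (rule tendstoD)
qed

lemma rat_fun_family_bounded_increment:
  fixes a b :: "'a::real_normed_vector \<Rightarrow> nat \<Rightarrow> complex"
  assumes a: "\<forall>j\<le>d. (\<lambda>y. a y j) differentiable (at 0)" and b: "\<forall>j\<le>d. (\<lambda>y. b y j) differentiable (at 0)"
    and q: "hom (b 0) d 0 1 \<noteq> 0"
  obtains K s r where "K \<ge> 0" "s > 0" "r > 0"
    "\<And>y w. norm y < s \<Longrightarrow> norm w < r \<Longrightarrow> hom (b y) d w 1 \<noteq> 0 \<and>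
       norm (rat_fun (a y) (b y) d w - rat_fun (a 0) (b 0) d w) \<le> K * norm y"
proof -
  define m where "m = norm (hom (b 0) d 0 1) / 4"
  define M where "M = norm (hom (a 0) d 0 1) + 1"
  have m: "m > 0" using q by (simp add: m_def)
  obtain Ca where Ca: "Ca \<ge> 0" and evA: "\<forall>\<^sub>F y in nhds 0. \<forall>w. norm w \<le> 1 \<longrightarrow>
      norm (hom (a y) d w 1 - hom (a 0) d w 1) \<le> Ca * norm (y - 0)"
    by (rule hom_family_bounded_increment[OF a])
  obtain Cb where Cb: "Cb \<ge> 0" and evB: "\<forall>\<^sub>F y in nhds 0. \<forall>w. norm w \<le> 1 \<longrightarrow>
      norm (hom (b y) d w 1 - hom (b 0) d w 1) \<le> Cb * norm (y - 0)"
    by (rule hom_family_bounded_increment[OF b])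
  have "\<forall>\<^sub>F y in nhds 0. Cb * norm y < m"
    using m by (intro order_tendstoD(2) tendsto_eq_intros) (auto intro: filterlim_ident)
  with evA evB have "\<forall>\<^sub>F y in nhds 0. (\<forall>w. norm w \<le> 1 \<longrightarrow>
      norm (hom (a y) d w 1 - hom (a 0) d w 1) \<le> Ca * norm (y - 0)) \<and> (\<forall>w. norm w \<le> 1 \<longrightarrow>
      norm (hom (b y) d w 1 - hom (b 0) d w 1) \<le> Cb * norm (y - 0)) \<and> Cb * norm y < m"
    by (intro eventually_conj)
  then obtain s where s: "s > 0" "\<And>y w. norm y < s \<Longrightarrow> norm w \<le> 1 \<Longrightarrow>
      norm (hom (a y) d w 1 - hom (a 0) d w 1) \<le> Ca * norm y \<and>
      norm (hom (b y) d w 1 - hom (b 0) d w 1) \<le> Cb * norm y \<and> Cb * norm y < m"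
    unfolding eventually_nhds_metric by (auto simp: dist_norm)
  have "\<forall>\<^sub>F w in nhds 0. dist (hom (b 0) d w 1) (hom (b 0) d 0 1) < 2 * m"
    "\<forall>\<^sub>F w in nhds 0. dist (hom (a 0) d w 1) (hom (a 0) d 0 1) < 1"
    using m by (simp_all add: eventually_hom_near_0)
  moreover have "\<forall>\<^sub>F w in nhds 0. w \<in> ball 0 1" by (intro eventually_nhds_in_open) auto
  ultimately have "\<forall>\<^sub>F w in nhds 0. dist (hom (b 0) d w 1) (hom (b 0) d 0 1) < 2 * m \<and>
      dist (hom (a 0) d w 1) (hom (a 0) d 0 1) < 1 \<and> w \<in> ball 0 1"
    by eventually_elim blast
  then obtain r where r: "r > 0" "\<And>w. norm w < r \<Longrightarrow> dist (hom (b 0) d w 1) (hom (b 0) d 0 1) < 2 * m \<and>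
      dist (hom (a 0) d w 1) (hom (a 0) d 0 1) < 1 \<and> norm w < 1"
    unfolding eventually_nhds_metric by (auto simp: dist_norm)
  show ?thesis
  proof (rule that[of "Ca / m + M * Cb / m\<^sup>2" s r])
    fix y :: 'a and w :: complex assume y: "norm y < s" and w: "norm w < r"
    have dA: "norm (hom (a y) d w 1 - hom (a 0) d w 1) \<le> Ca * norm y"
      and dB: "norm (hom (b y) d w 1 - hom (b 0) d w 1) \<le> Cb * norm y" and Cm: "Cb * norm y < m"
      using s(2)[OF y, of w] r(2)[OF w] by auto
    have Q0: "norm (hom (b 0) d w 1) \<ge> 2 * m"
      using r(2)[OF w] norm_triangle_sub[of "hom (b 0) d 0 1" "hom (b 0) d w 1"]
      by (simp add: dist_norm norm_minus_commute m_def)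
    have Qy: "norm (hom (b y) d w 1) \<ge> m"
      using dB Cm Q0 norm_triangle_sub[of "hom (b 0) d w 1" "hom (b y) d w 1"]
      by (simp add: norm_minus_commute)
    have P0: "norm (hom (a 0) d w 1) \<le> M"
      using r(2)[OF w] norm_triangle_sub[of "hom (a 0) d w 1" "hom (a 0) d 0 1"]
      by (simp add: dist_norm M_def)
    have "norm (rat_fun (a y) (b y) d w - rat_fun (a 0) (b 0) d w) \<le> Ca * norm y / m + M * (Cb * norm y) / m\<^sup>2"
      unfolding rat_fun_def using dA dB m Qy Q0 P0 by (intro norm_divide_diff_le) auto
    also have "\<dots> = (Ca / m + M * Cb / m\<^sup>2) * norm y" by (simp add: algebra_simps)
    finally show "hom (b y) d w 1 \<noteq> 0 \<and>
        norm (rat_fun (a y) (b y) d w - rat_fun (a 0) (b 0) d w) \<le> (Ca / m + M * Cb / m\<^sup>2) * norm y"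
      using Qy m by auto
  qed (use Ca Cb m s r in \<open>auto simp: M_def\<close>)
qed

lemma holomorphic_lipschitz_on_cball:
  assumes hol: "F holomorphic_on S" and S: "open S" "z \<in> S" and L: "norm (deriv F z) < L"
  obtains R where "R > 0" "cball z R \<subseteq> S" "L-lipschitz_on (cball z R) F"
proof -
  have "continuous_on S (deriv F)"
    using holomorphic_deriv[OF hol S(1)] by (rule holomorphic_on_imp_continuous_on)
  then have "isCont (deriv F) z" using S by (simp add: continuous_on_eq_continuous_at)
  then have "((\<lambda>w. norm (deriv F w)) \<longlongrightarrow> norm (deriv F z)) (nhds z)"
    by (intro tendsto_norm) (simp only: isCont_def tendsto_at_iff_tendsto_nhds)
  then have "\<forall>\<^sub>F w in nhds z. norm (deriv F w) < L" using L by (rule order_tendstoD(2))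
  moreover have "\<forall>\<^sub>F w in nhds z. w \<in> S" using S by (rule eventually_nhds_in_open)
  ultimately have "\<forall>\<^sub>F w in nhds z. w \<in> S \<and> norm (deriv F w) < L" by eventually_elim blast
  then obtain R0 where R0: "R0 > 0" "\<And>w. dist w z < R0 \<Longrightarrow> w \<in> S \<and> norm (deriv F w) < L"
    unfolding eventually_nhds_metric by blast
  define R where "R = R0 / 2"
  have near: "w \<in> S \<and> norm (deriv F w) \<le> L" if "w \<in> cball z R" for w
    using R0(2)[of w] that R0(1) by (auto simp: R_def dist_commute)
  have "L-lipschitz_on (cball z R) F"
  proof (rule lipschitz_onI)
    fix w w' assume "w \<in> cball z R" "w' \<in> cball z R"
    then have "norm (F w - F w') \<le> L * norm (w - w')"
      using near by (intro field_differentiable_bound[where S="cball z R" and f'="deriv F"])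
        (auto intro: holomorphic_derivI[OF hol S(1)])
    then show "dist (F w) (F w') \<le> L * dist w w'" by (simp add: dist_norm)
  next
    show "0 \<le> L" using L norm_ge_zero[of "deriv F z"] by linarith
  qed
  moreover have "cball z R \<subseteq> S" using near by blast
  ultimately show ?thesis using that[of R] R0(1) by (simp add: R_def)
qed

lemma rat_map_family_local_model:
  fixes a b :: "'a::real_normed_vector \<Rightarrow> nat \<Rightarrow> complex"
  assumes a: "\<forall>j\<le>d. (\<lambda>y. a y j) differentiable (at 0)" and b: "\<forall>j\<le>d. (\<lambda>y. b y j) differentiable (at 0)"
    and fin: "rat_map (a 0) (b 0) d (Some 0) \<noteq> None"
    and L: "norm (deriv (\<lambda>w. coord (Some 0) (rat_map (a 0) (b 0) d (Some w))) 0) < L"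
  obtains K s R F where "K \<ge> 0" "s > 0" "R > 0" "L-lipschitz_on (cball 0 R) F"
    "\<And>w. norm w \<le> R \<Longrightarrow> rat_map (a 0) (b 0) d (Some w) = Some (F w)"
    "\<And>y w. norm y < s \<Longrightarrow> norm w \<le> R \<Longrightarrow>
       \<exists>w'. rat_map (a y) (b y) d (Some w) = Some w' \<and> norm (w' - F w) \<le> K * norm y"
proof -
  define F where "F = rat_fun (a 0) (b 0) d"
  have "hom (b 0) d 0 1 \<noteq> 0" using fin by (auto simp: rat_map_def proj_pt_def)
  then obtain K s r where K: "K \<ge> 0" "s > 0" "r > 0"
    and near: "\<And>y w. norm y < s \<Longrightarrow> norm w < r \<Longrightarrow> hom (b y) d w 1 \<noteq> 0 \<and>
       norm (rat_fun (a y) (b y) d w - F w) \<le> K * norm y"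
    using rat_fun_family_bounded_increment[OF a b] unfolding F_def by blast
  have hol: "F holomorphic_on ball 0 r"
    unfolding F_def using near[of 0] K by (intro holomorphic_on_rat_fun) auto
  have "norm (deriv F 0) < L"
    using L deriv_coord_rat_map[where r=r and b="b 0" and a="a 0"] near[of 0] K by (simp add: F_def)
  then obtain R where R: "R > 0" "cball (0::complex) R \<subseteq> ball 0 r" "L-lipschitz_on (cball 0 R) F"
    using holomorphic_lipschitz_on_cball[OF hol open_ball centre_in_ball[THEN iffD2, OF K(3)]] by blast
  have close: "\<exists>w'. rat_map (a y) (b y) d (Some w) = Some w' \<and> norm (w' - F w) \<le> K * norm y"
    if "norm y < s" "norm w \<le> R" for y w
  proof -
    have "norm w < r" using that(2) R(2) by (auto simp: subset_iff)
    then show ?thesis using near[OF that(1)] by (auto simp: rat_map_Some)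
  qed
  show ?thesis
  proof (rule that[OF K(1,2) R(1,3) _ close])
    fix w :: complex assume "norm w \<le> R"
    then show "rat_map (a 0) (b 0) d (Some w) = Some (F w)" using close[of 0 w] K(2) by auto
  qed
qed

lemma perturbed_orbit_shadows:
  fixes \<Phi> :: "'b::real_normed_vector option \<Rightarrow> 'b option" and F :: "'b \<Rightarrow> 'b" and u :: "nat \<Rightarrow> 'b"
  assumes lip: "L-lipschitz_on (cball 0 R) F" and L: "1 \<le> L" and \<eta>: "0 \<le> \<eta>"
    and close: "\<And>w. norm w \<le> R \<Longrightarrow> \<exists>w'. \<Phi> (Some w) = Some w' \<and> norm (w' - F w) \<le> \<eta>"
    and orbit: "\<And>t. u (Suc t) = F (u t)" and small: "\<And>t. norm (u t) < R / 2"
    and start: "norm (v - u 0) \<le> e"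
    and T: "(e + \<eta> * T) * L ^ T \<le> R / 2"
  shows "\<exists>w. (\<Phi> ^^ T) (Some v) = Some w \<and> norm (w - u T) \<le> (e + \<eta> * T) * L ^ T"
  using T
proof (induction T)
  \<comment> \<open>The errors satisfy e_(t+1) <= eta + L e_t, and (e + eta t) L^t is a supersolution
    because L >= 1; the bound R / 2 keeps the perturbed orbit where F is Lipschitz.\<close>
  case 0
  then show ?case using start by simp
next
  case (Suc T)
  have "e \<ge> 0" using start norm_ge_zero order_trans by blast
  then have grow: "(e + \<eta> * T) * L ^ T \<le> (e + \<eta> * Suc T) * L ^ Suc T"
    using L \<eta> by (intro mult_mono power_increasing add_left_mono mult_left_mono) auto
  then obtain w where w: "(\<Phi> ^^ T) (Some v) = Some w" "norm (w - u T) \<le> (e + \<eta> * T) * L ^ T"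
    using Suc by auto
  have "norm w \<le> R"
    using w(2) Suc.prems grow small[of T] norm_triangle_sub[of w "u T"] by linarith
  then obtain w' where w': "\<Phi> (Some w) = Some w'" "norm (w' - F w) \<le> \<eta>" using close by blast
  have "norm (u T) \<le> R" using small[of T] norm_ge_zero[of "u T"] by linarith
  with \<open>norm w \<le> R\<close> have "norm (F w - F (u T)) \<le> L * norm (w - u T)"
    using lipschitz_on_normD[OF lip] by simp
  have "w' - u (Suc T) = (w' - F w) + (F w - F (u T))" using orbit by simp
  then have "norm (w' - u (Suc T)) \<le> \<eta> + L * ((e + \<eta> * T) * L ^ T)"
    using w(2) w' \<open>norm (F w - F (u T)) \<le> L * norm (w - u T)\<close> L norm_triangle_ineq[of "w' - F w"]
    by (smt (verit) mult_left_mono)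
  also have "\<dots> \<le> (e + \<eta> * Suc T) * L ^ Suc T"
    using \<eta> mult_left_mono[OF one_le_power[OF L, of "Suc T"] \<eta>] by (simp add: algebra_simps)
  finally show ?case using w(1) w'(1) by simp
qed

lemma orbit_eventually_in_chart:
  fixes \<phi> :: "'b::real_normed_vector option \<Rightarrow> 'b option"
  assumes chart: "\<And>w. norm w < R \<Longrightarrow> \<phi> (Some w) = Some (F w)" and "R > 0"
    and conv: "\<forall>\<epsilon>>0. \<exists>N. \<forall>n\<ge>N. \<exists>w. (\<phi> ^^ n) p = Some w \<and> norm w < \<epsilon>"
  obtains k u where "\<And>t. (\<phi> ^^ (k + t)) p = Some (u t)" "\<And>t. u (Suc t) = F (u t)"
    "\<And>t. norm (u t) < R" "u \<longlonglongrightarrow> 0"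
proof -
  obtain k where k: "\<And>n. n \<ge> k \<Longrightarrow> \<exists>w. (\<phi> ^^ n) p = Some w \<and> norm w < R"
    using conv \<open>R > 0\<close> by blast
  define u where "u t = the ((\<phi> ^^ (k + t)) p)" for t
  have u: "(\<phi> ^^ (k + t)) p = Some (u t) \<and> norm (u t) < R" for t
    using k[of "k + t"] by (auto simp: u_def)
  have "u (Suc t) = F (u t)" for t
    using u[of t] u[of "Suc t"] chart by simp
  moreover have "u \<longlonglongrightarrow> 0"
  proof (rule LIMSEQ_I)
    fix \<epsilon> :: real assume "\<epsilon> > 0"
    then obtain N where "\<forall>n\<ge>N. \<exists>w. (\<phi> ^^ n) p = Some w \<and> norm w < \<epsilon>" using conv by blast
    then show "\<exists>N. \<forall>t\<ge>N. norm (u t - 0) < \<epsilon>"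
      using u by (metis diff_zero option.inject trans_le_add2)
  qed
  ultimately show ?thesis using that u by blast
qed

lemma linear_times_power_tendsto_0:
  fixes q :: real
  assumes "0 \<le> q" "q < 1"
  shows "(\<lambda>n. (C + K * real n) * q ^ n) \<longlonglongrightarrow> 0"
proof -
  have "(\<lambda>n. C * q ^ n + K * (of_nat n * q ^ n)) \<longlonglongrightarrow> C * 0 + K * 0"
    using assms by (intro tendsto_intros powser_times_n_limit_0) auto
  then show ?thesis by (simp add: algebra_simps)
qed

lemma perturbed_orbits_tendsto_0_at_rescaled_parameters:
  fixes \<Phi> :: "'a::real_normed_vector \<Rightarrow> 'b::real_normed_vector option \<Rightarrow> 'b option"
    and p :: "'a \<Rightarrow> 'b option" and F :: "'b \<Rightarrow> 'b" and u :: "nat \<Rightarrow> 'b"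
  assumes L: "1 \<le> L" "L < \<rho>" and lip: "L-lipschitz_on (cball 0 R) F"
    and orbit: "\<And>t. u (Suc t) = F (u t)" and small: "\<And>t. norm (u t) < R / 2" and lim: "u \<longlonglongrightarrow> 0"
    and close: "\<And>y w. norm y < s \<Longrightarrow> norm w \<le> R \<Longrightarrow>
                  \<exists>w'. \<Phi> y (Some w) = Some w' \<and> norm (w' - F w) \<le> K * norm y"
    and start: "\<And>y. norm y < s' \<Longrightarrow> \<exists>v. p y = Some v \<and> norm (v - u 0) \<le> C * norm y"
    and "s > 0" "s' > 0" "K \<ge> 0" "C \<ge> 0"
  obtains \<delta> where "\<delta> > 0"
    "\<And>\<epsilon>. \<epsilon> > 0 \<Longrightarrow> \<exists>N. \<forall>n\<ge>N. \<forall>y. norm y \<le> \<delta> / \<rho> ^ n \<longrightarrow>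
                     (\<exists>w. (\<Phi> y ^^ n) (p y) = Some w \<and> norm w < \<epsilon>)"
proof -
  define g where "g n = (C + K * n) * (L / \<rho>) ^ n" for n
  have g_lim: "g \<longlonglongrightarrow> 0"
    unfolding g_def using L by (intro linear_times_power_tendsto_0) auto
  then obtain B where B: "B > 0" "\<And>n. norm (g n) \<le> B"
    by (metis BseqE convergent_imp_Bseq convergentI)
  have "R > 0" using small[of 0] norm_ge_zero[of "u 0"] by linarith
  define \<delta> where "\<delta> = min (min s s' / 2) (R / (2 * B))"
  have \<delta>: "\<delta> > 0" "\<delta> < min s s'" "B * \<delta> \<le> R / 2"
    using \<open>s > 0\<close> \<open>s' > 0\<close> \<open>R > 0\<close> B by (auto simp: \<delta>_def min_def field_simps)
  have shadow: "\<exists>w. (\<Phi> y ^^ n) (p y) = Some w \<and> norm (w - u n) \<le> g n * \<delta>"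
    if y: "norm y \<le> \<delta> / \<rho> ^ n" for y n
  proof -
    have "\<rho> ^ n \<ge> 1" using L by (intro one_le_power) auto
    then have "\<delta> / \<rho> ^ n \<le> \<delta>" using \<delta> by (simp add: divide_le_eq)
    then have ys: "norm y < s" "norm y < s'" using y \<delta> by linarith+
    obtain v where v: "p y = Some v" "norm (v - u 0) \<le> C * norm y" using start[OF ys(2)] by blast
    have "(C * norm y + K * norm y * n) * L ^ n = (C + K * n) * L ^ n * norm y"
      by (simp add: algebra_simps)
    also have "\<dots> \<le> (C + K * n) * L ^ n * (\<delta> / \<rho> ^ n)"
      using y L \<open>C \<ge> 0\<close> \<open>K \<ge> 0\<close> by (intro mult_left_mono) auto
    also have "\<dots> = g n * \<delta>" by (simp add: g_def power_divide)
    finally have E: "(C * norm y + K * norm y * n) * L ^ n \<le> g n * \<delta>" .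
    have "g n * \<delta> \<le> B * \<delta>" using B(2)[of n] \<delta> by (intro mult_right_mono) auto
    with E \<delta> have "(C * norm y + K * norm y * n) * L ^ n \<le> R / 2" by linarith
    moreover have "0 \<le> K * norm y" using \<open>K \<ge> 0\<close> by simp
    ultimately obtain w where "(\<Phi> y ^^ n) (Some v) = Some w" "norm (w - u n) \<le> (C * norm y + K * norm y * n) * L ^ n"
      using perturbed_orbit_shadows[OF lip L(1) _ close[OF ys(1)] orbit small v(2)] by blast
    then show ?thesis using E v(1) by auto
  qed
  show ?thesis
  proof (rule that[OF \<delta>(1)])
    fix \<epsilon> :: real assume "\<epsilon> > 0"
    have "(\<lambda>n. g n * \<delta>) \<longlonglongrightarrow> 0" using tendsto_mult_left_zero[OF g_lim] .
    then have "\<forall>\<^sub>F n in sequentially. g n * \<delta> < \<epsilon> / 2"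
      using \<open>\<epsilon> > 0\<close> by (intro order_tendstoD(2)) auto
    moreover have "\<forall>\<^sub>F n in sequentially. norm (u n) < \<epsilon> / 2"
      using tendsto_norm_zero[OF lim] \<open>\<epsilon> > 0\<close> by (intro order_tendstoD(2)) auto
    ultimately have "\<forall>\<^sub>F n in sequentially. g n * \<delta> < \<epsilon> / 2 \<and> norm (u n) < \<epsilon> / 2"
      by (rule eventually_conj)
    then obtain N where N: "\<And>n. n \<ge> N \<Longrightarrow> g n * \<delta> < \<epsilon> / 2 \<and> norm (u n) < \<epsilon> / 2"
      unfolding eventually_sequentially by blast
    show "\<exists>N. \<forall>n\<ge>N. \<forall>y. norm y \<le> \<delta> / \<rho> ^ n \<longrightarrow> (\<exists>w. (\<Phi> y ^^ n) (p y) = Some w \<and> norm w < \<epsilon>)"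
    proof (intro exI[of _ N] allI impI)
      fix n :: nat and y :: 'a assume n: "N \<le> n" and y: "norm y \<le> \<delta> / \<rho> ^ n"
      obtain w where "(\<Phi> y ^^ n) (p y) = Some w" "norm (w - u n) \<le> g n * \<delta>"
        using shadow[OF y] by blast
      then show "\<exists>w. (\<Phi> y ^^ n) (p y) = Some w \<and> norm w < \<epsilon>"
        using N[OF n] norm_triangle_sub[of w "u n"] by auto
    qed
  qed
qed

lemma rescaled_orbits_tendsto_0_on_polydisk:
  fixes \<Phi> :: "complex ^ 'r \<Rightarrow> 'b::real_normed_vector option \<Rightarrow> 'b option" and G :: "complex ^ 'r \<Rightarrow> 'b option"
  assumes "\<delta> > 0" "\<rho> > 1"
    and conv: "\<And>\<epsilon>. \<epsilon> > 0 \<Longrightarrow> \<exists>N. \<forall>n\<ge>N. \<forall>y. norm y \<le> \<delta> / \<rho> ^ n \<longrightarrow>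
                 (\<exists>w. (\<Phi> y ^^ n) ((\<Phi> y ^^ k) (G y)) = Some w \<and> norm w < \<epsilon>)"
  shows "\<exists>\<delta>>0. \<forall>\<epsilon>>0. \<exists>N. \<forall>n\<ge>N. \<forall>x\<in>polydisk \<delta>.
           \<exists>w. (\<Phi> ((1 / \<rho> ^ n) *\<^sub>R x) ^^ n) (G ((1 / \<rho> ^ n) *\<^sub>R x)) = Some w \<and> norm w < \<epsilon>"
proof (intro exI[of _ "\<delta> / CARD('r)"] conjI allI impI)
  fix \<epsilon> :: real assume "\<epsilon> > 0"
  then obtain N where N: "\<forall>n\<ge>N. \<forall>y. norm y \<le> \<delta> / \<rho> ^ n \<longrightarrow>
      (\<exists>w. (\<Phi> y ^^ n) ((\<Phi> y ^^ k) (G y)) = Some w \<and> norm w < \<epsilon>)"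
    using conv by blast
  show "\<exists>N. \<forall>n\<ge>N. \<forall>x\<in>polydisk (\<delta> / CARD('r)).
      \<exists>w. (\<Phi> ((1 / \<rho> ^ n) *\<^sub>R x) ^^ n) (G ((1 / \<rho> ^ n) *\<^sub>R x)) = Some w \<and> norm w < \<epsilon>"
  proof (intro exI[of _ "N + k"] allI impI ballI)
    fix n :: nat and x :: "complex ^ 'r" assume n: "N + k \<le> n" and x: "x \<in> polydisk (\<delta> / CARD('r))"
    have "norm x \<le> sum (\<lambda>i. norm (x $ i)) UNIV" by (simp add: norm_vec_def L2_set_le_sum)
    also have "\<dots> \<le> \<delta>"
      using x sum_mono[of UNIV "\<lambda>i. norm (x $ i)" "\<lambda>_. \<delta> / CARD('r)"] by (auto simp: polydisk_def less_imp_le)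
    finally have "norm x / \<rho> ^ n \<le> \<delta> / \<rho> ^ n" using \<open>\<rho> > 1\<close> by (intro divide_right_mono) auto
    also have "\<dots> \<le> \<delta> / \<rho> ^ (n - k)"
      using \<open>\<delta> > 0\<close> \<open>\<rho> > 1\<close> by (intro divide_left_mono power_increasing mult_pos_pos) auto
    finally have "norm ((1 / \<rho> ^ n) *\<^sub>R x) \<le> \<delta> / \<rho> ^ (n - k)" using \<open>\<rho> > 1\<close> by simp
    moreover have "\<Phi> y ^^ n = \<Phi> y ^^ (n - k) \<circ> \<Phi> y ^^ k" for y
      using n by (simp flip: funpow_add)
    ultimately show "\<exists>w. (\<Phi> ((1 / \<rho> ^ n) *\<^sub>R x) ^^ n) (G ((1 / \<rho> ^ n) *\<^sub>R x)) = Some w \<and> norm w < \<epsilon>"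
      using N n by auto
  qed
qed (use \<open>\<delta> > 0\<close> in simp)

theorem lemma4p1:
  fixes A B :: "nat \<Rightarrow> complex ^ 'r \<Rightarrow> complex"
    and d :: nat
    and c :: "complex ^ 'r \<Rightarrow> sphere"
    and \<rho> :: real
  defines "f \<equiv> (\<lambda>x. rat_map (\<lambda>j. A j x) (\<lambda>j. B j x) d)"
  assumes deg: "d \<ge> 2"
    and holA: "\<forall>j\<le>d. holo_on (A j) (polydisk 1)"
    and holB: "\<forall>j\<le>d. holo_on (B j) (polydisk 1)"
    and nondeg: "\<forall>x\<in>polydisk 1. no_common_zero (\<lambda>j. A j x) (\<lambda>j. B j x) d"
    and holc: "holo_sphere c (polydisk 1)"
    and crit: "\<forall>x\<in>polydisk 1. is_crit (f x) (c x)"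
    and fix0: "f 0 (Some 0) = Some 0"
    and parab: "\<exists>m::nat. m > 0 \<and> (deriv (\<lambda>w. coord (Some 0) (f 0 (Some w))) 0) ^ m = 1"
    and attr: "\<forall>\<epsilon>>0. \<exists>N. \<forall>n\<ge>N. \<exists>w. (f 0 ^^ n) (c 0) = Some w \<and> norm w < \<epsilon>"
    and rho: "\<rho> > 1"
  shows "\<exists>\<delta>>0. \<forall>\<epsilon>>0. \<exists>N. \<forall>n\<ge>N. \<forall>x\<in>polydisk \<delta>.
           \<exists>w. (f ((1 / \<rho> ^ n) *\<^sub>R x) ^^ n) (c ((1 / \<rho> ^ n) *\<^sub>R x)) = Some w \<and> norm w < \<epsilon>"
proof -
  have 0: "0 \<in> polydisk 1" by (simp add: polydisk_def)
  have dA: "\<forall>j\<le>d. (\<lambda>y. A j y) differentiable (at 0)" and dB: "\<forall>j\<le>d. (\<lambda>y. B j y) differentiable (at 0)"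
    using holA holB 0 by (auto intro: holo_on_imp_differentiable)
  obtain m :: nat where "m > 0" "(deriv (\<lambda>w. coord (Some 0) (f 0 (Some w))) 0) ^ m = 1"
    using parab by blast
  then have mult:
    "norm (deriv (\<lambda>w. coord (Some 0) (rat_map (\<lambda>j. A j 0) (\<lambda>j. B j 0) d (Some w))) 0) < (1 + \<rho>) / 2"
    using power_eq_1_iff rho unfolding f_def by fastforce
  have f_eq: "rat_map (\<lambda>j. A j y) (\<lambda>j. B j y) d = f y" for y by (simp add: f_def)
  have fin: "rat_map (\<lambda>j. A j 0) (\<lambda>j. B j 0) d (Some 0) \<noteq> None" using fix0 by (simp add: f_def)
  obtain K s R F where K: "K \<ge> 0" "s > 0" and R: "R > 0" "((1 + \<rho>) / 2)-lipschitz_on (cball 0 R) F"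
    and chart: "\<And>w. norm w \<le> R \<Longrightarrow> f 0 (Some w) = Some (F w)"
    and close: "\<And>y w. norm y < s \<Longrightarrow> norm w \<le> R \<Longrightarrow>
                  \<exists>w'. f y (Some w) = Some w' \<and> norm (w' - F w) \<le> K * norm y"
    by (fact rat_map_family_local_model[OF dA dB fin mult, unfolded f_eq])
  obtain k u where u: "\<And>t. (f 0 ^^ (k + t)) (c 0) = Some (u t)" "\<And>t. u (Suc t) = F (u t)"
    "\<And>t. norm (u t) < R / 2" "u \<longlonglongrightarrow> 0"
    using orbit_eventually_in_chart[of "R / 2" "f 0" F, OF _ _ attr] chart R(1) by auto
  have lift: "has_differentiable_lift (\<lambda>y. (f y ^^ k) (c y)) 0"
    unfolding f_def using holo_sphere_has_differentiable_lift[OF holc 0] dA dB nondeg 0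
    by (intro has_differentiable_lift_funpow) auto
  have start0: "(f 0 ^^ k) (c 0) = Some (u 0)" using u(1)[of 0] by simp
  obtain C s1 where C: "C \<ge> 0" "s1 > 0"
    and start: "\<And>y. norm (y - 0) < s1 \<Longrightarrow>
                  \<exists>v. (f y ^^ k) (c y) = Some v \<and> norm (v - u 0) \<le> C * norm (y - 0)"
    by (fact has_differentiable_lift_imp_bounded_increment[OF lift start0])
  have L: "1 \<le> (1 + \<rho>) / 2" "(1 + \<rho>) / 2 < \<rho>" using rho by auto
  then obtain \<delta> where \<delta>: "\<delta> > 0"
    and conv: "\<And>\<epsilon>. \<epsilon> > 0 \<Longrightarrow> \<exists>N. \<forall>n\<ge>N. \<forall>y. norm y \<le> \<delta> / \<rho> ^ n \<longrightarrow>
      (\<exists>w. (f y ^^ n) ((f y ^^ k) (c y)) = Some w \<and> norm w < \<epsilon>)"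
    using perturbed_orbits_tendsto_0_at_rescaled_parameters[OF L R(2) u(2,3,4) close start[unfolded diff_zero]]
      K C by blast
  show ?thesis by (rule rescaled_orbits_tendsto_0_on_polydisk[OF \<delta> rho conv])
qed

end
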